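(* Let $n\ge2$, $q$ not a root of unity, and let $V_\Lambda$ be the symmetric irreducible representation (Young tableau $l_1=\Lambda>0$, $l_2=\dots=l_n=0$) with crystal-basis generators $\widehat e^{\pm}_i$, $N_1,\dots,N_n$ as in the context. Let $E^{\pm}_i$, $H_i$ be the $sl(n)$ generators $E^{+}_{i}=\widehat e^{+}_{i}\sqrt{(N_i+1)N_{i+1}}$, $E^{-}_{i}=\sqrt{(N_i+1)N_{i+1}}\,\widehat e^{-}_{i}$, $H_i=N_i-N_{i+1}$, and $e^{\pm}_i$, $h_i$ the $sl_q(n)$ generators $e^{+}_{i}=\widehat e^{+}_{i}\sqrt{[N_i+1]_q[N_{i+1}]_q}$, $e^{-}_{i}=\sqrt{[N_i+1]_q[N_{i+1}]_q}\,\widehat e^{-}_{i}$, $h_i=H_i$. Then on $V_\Lambda$ the $sl(n)$ and $sl_q(n)$ generators are related by $$e^{+}_{i}=E^{+}_{i}\sqrt{\frac{[N_i+1]_q[N_{i+1}]_q}{(N_i+1)N_{i+1}}},\qquad e^{-}_{i}=\sqrt{\frac{[N_i+1]_q[N_{i+1}]_q}{(N_i+1)N_{i+1}}}\;E^{-}_{i},\qquad h_i=H_i,$$ giving an invertible deforming map between $sl(n)$ and $sl_q(n)$ on the symmetric irreducible representations; for $n=2$ this map coincides with the Curtright–Zachos map.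
   Context: $[x]_q=(q^x-q^{-x})/(q-q^{-1})$. Crystal-basis setting: by Kashiwara, in the limit $q\to0$ of $gl(n)_q$ there are operators $\widehat e^{\pm}_i$ ($i=1,\dots,n-1$) and a basis of each highest-weight irreducible representation labelled by weights, on which $N_i$ act diagonally (eigenvalue $l_i$, the $i$-th row length of the corresponding Young tableau), $\widehat e^{\pm}_i$ shift the weight by $\pm$ the $i$-th row of the Cartan matrix of $sl(n)$ (mapping basis vectors to basis vectors, or to zero at the ends of $i$-strings), and $[N_i,\widehat e^{\pm}_k]=\pm(\delta_{i,k}-\delta_{i-1,k})\widehat e^{\pm}_k$. The Curtright–Zachos map: for $sl(2)$ with generators $j_\pm,j_0$ and $sl_q(2)$ with $J_\pm,J_0$, $J_+=\mathcal Q j_+$, $J_-=j_-\mathcal Q$, $J_0=j_0$, with $\mathcal Q=\sqrt{[J_0+\mathbf J]_q[J_0-\mathbf J-1]_q/((j_0+\mathbf j)(j_0-\mathbf j-1))}$, where $\mathbf j(\mathbf j+1)$ and $[\mathbf J]_q[\mathbf J+1]_q$ are the Casimirs; here $\mathbf j=(N_1+N_2)/2$, $j_0=(N_1-N_2)/2$. The ratios are understood on eigenvalues where the denominators are nonzero. *)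

theory Defs
  imports Complex_Main
begin

text \<open>Basis vectors are labelled by occupation numbers m :: nat => nat with
 m i = 0 outside {1..n} and m 1 + ... + m n = Lambda; N_i acts diagonally with
 eigenvalue m i.  Vectors are coefficient functions (state => complex),
 operators are maps on such functions.\<close>

type_synonym state = "nat \<Rightarrow> nat"
type_synonym vect = "state \<Rightarrow> complex"

definition sym_states :: "nat \<Rightarrow> nat \<Rightarrow> state set" where
  "sym_states n Lam = {m. (\<forall>i. (i = 0 \<or> n < i) \<longrightarrow> m i = 0) \<and> (\<Sum>i\<in>{1..n}. m i) = Lam}"

definition in_V :: "nat \<Rightarrow> nat \<Rightarrow> vect \<Rightarrow> bool" where
  "in_V n Lam v \<longleftrightarrow> (\<forall>m. m \<notin> sym_states n Lam \<longrightarrow> v m = 0)"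

definition diag :: "(state \<Rightarrow> complex) \<Rightarrow> vect \<Rightarrow> vect" where
  "diag f v = (\<lambda>m. f m * v m)"

definition Nop :: "nat \<Rightarrow> vect \<Rightarrow> vect" where
  "Nop i = diag (\<lambda>m. of_nat (m i))"

text \<open>Crystal operators: ehat_plus i sends basis vector m to
  m(i := m i + 1, i+1 := m (i+1) - 1) (zero if m (i+1) = 0);
  ehat_minus i sends m to m(i := m i - 1, i+1 := m (i+1) + 1) (zero if m i = 0).
  Written on coefficient functions.\<close>
definition ehat_plus :: "nat \<Rightarrow> vect \<Rightarrow> vect" where
  "ehat_plus i v = (\<lambda>m'. if 0 < m' i
      then v (m'(i := m' i - 1, Suc i := m' (Suc i) + 1)) else 0)"

definition ehat_minus :: "nat \<Rightarrow> vect \<Rightarrow> vect" where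
  "ehat_minus i v = (\<lambda>m'. if 0 < m' (Suc i)
      then v (m'(i := m' i + 1, Suc i := m' (Suc i) - 1)) else 0)"

definition qnum :: "complex \<Rightarrow> int \<Rightarrow> complex" where
  "qnum q x = (q powi x - q powi (- x)) / (q - inverse q)"

definition not_root_of_unity :: "complex \<Rightarrow> bool" where
  "not_root_of_unity q \<longleftrightarrow> q \<noteq> 0 \<and> (\<forall>k::nat. 0 < k \<longrightarrow> q ^ k \<noteq> 1)"

definition Eplus :: "nat \<Rightarrow> vect \<Rightarrow> vect" where
  "Eplus i = ehat_plus i \<circ> diag (\<lambda>m. complex_of_real (sqrt (real ((m i + 1) * m (Suc i)))))"

definition Eminus :: "nat \<Rightarrow> vect \<Rightarrow> vect" where
  "Eminus i = diag (\<lambda>m. complex_of_real (sqrt (real ((m i + 1) * m (Suc i))))) \<circ> ehat_minus i"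

definition Hop :: "nat \<Rightarrow> vect \<Rightarrow> vect" where
  "Hop i = diag (\<lambda>m. of_nat (m i) - of_nat (m (Suc i)))"

definition eplus :: "complex \<Rightarrow> nat \<Rightarrow> vect \<Rightarrow> vect" where
  "eplus q i = ehat_plus i \<circ> diag (\<lambda>m. csqrt (qnum q (int (m i) + 1) * qnum q (int (m (Suc i)))))"

definition eminus :: "complex \<Rightarrow> nat \<Rightarrow> vect \<Rightarrow> vect" where
  "eminus q i = diag (\<lambda>m. csqrt (qnum q (int (m i) + 1) * qnum q (int (m (Suc i))))) \<circ> ehat_minus i"

definition hop :: "nat \<Rightarrow> vect \<Rightarrow> vect" where
  "hop i = Hop i"

text \<open>The deforming ratio ([N_i+1]_q [N_{i+1}]_q)/((N_i+1) N_{i+1}) on eigenvalues.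
  (Where the denominator vanishes the value is irrelevant; Isabelle gives 0.)\<close>
definition qratio :: "complex \<Rightarrow> nat \<Rightarrow> state \<Rightarrow> complex" where
  "qratio q i m = (qnum q (int (m i) + 1) * qnum q (int (m (Suc i))))
                  / of_nat ((m i + 1) * m (Suc i))"

text \<open>Curtright--Zachos factor Q for n = 2, with j = (N_1+N_2)/2, j_0 = (N_1-N_2)/2,
  J_0 = j_0, J = j: Q = sqrt([J_0+J]_q [J_0-J-1]_q / ((j_0+j)(j_0-j-1))).
  On eigenvalues J_0+J = j_0+j = N_1 and J_0-J-1 = j_0-j-1 = -N_2-1 are integers.\<close>
definition CZ_Q :: "complex \<Rightarrow> state \<Rightarrow> complex" where
  "CZ_Q q m = (let jj = (real (m 1) + real (m 2)) / 2; j0 = (real (m 1) - real (m 2)) / 2 in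
     csqrt (qnum q (int (m 1)) * qnum q (- int (m 2) - 1)
            / complex_of_real ((j0 + jj) * (j0 - jj - 1))))"

end

theory Submission
  imports Defs
begin

text \<open>Every generator is a crystal operator composed with a diagonal operator, so
  all identities reduce to identities between the diagonal factors, and these only
  matter on the states that the crystal operator actually reads or writes, namely
  those with N_{i+1} > 0.  There the classical factor (N_i+1) N_{i+1} is a positive
  integer, and a complex square root commutes with division by a positive real; the
  q-factor is nonzero there when q is not a root of unity, which makes the map
  invertible.  For n = 2 the Curtright--Zachos factor, evaluated at the image of a
  crystal step, is exactly the square root of the ratio.\<close>

definition shift_up :: "nat \<Rightarrow> state \<Rightarrow> state" where
  "shift_up i m = m(i := m i + 1, Suc i := m (Suc i) - 1)"

lemma diag_comp_diag: "diag f \<circ> diag g = diag (\<lambda>m. f m * g m)"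
  by (simp add: diag_def fun_eq_iff)

lemma diag_comp_ehat_plus: "diag f \<circ> ehat_plus i = ehat_plus i \<circ> diag (f \<circ> shift_up i)"
  by (auto simp: diag_def ehat_plus_def shift_up_def fun_eq_iff)

lemma ehat_minus_comp_diag: "ehat_minus i \<circ> diag f = diag (f \<circ> shift_up i) \<circ> ehat_minus i"
  by (auto simp: diag_def ehat_minus_def shift_up_def fun_eq_iff)

lemma ehat_plus_comp_diag_cong:
  assumes "\<And>m. 0 < m (Suc i) \<Longrightarrow> f m = g m"
  shows "ehat_plus i \<circ> diag f = ehat_plus i \<circ> diag g"
  using assms by (auto simp: diag_def ehat_plus_def fun_eq_iff)

lemma diag_comp_ehat_minus_cong:
  assumes "\<And>m. 0 < m (Suc i) \<Longrightarrow> f m = g m"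
  shows "diag f \<circ> ehat_minus i = diag g \<circ> ehat_minus i"
  using assms by (auto simp: diag_def ehat_minus_def fun_eq_iff)

lemma csqrt_divide_of_real:
  assumes "0 < r"
  shows "csqrt (z / of_real r) = csqrt z / of_real (sqrt r)"
proof (rule csqrt_unique)
  show "(csqrt z / of_real (sqrt r))\<^sup>2 = z / of_real r"
    using assms by (simp add: power_divide flip: of_real_power)
  show "0 < Re (csqrt z / of_real (sqrt r)) \<or>
      Re (csqrt z / of_real (sqrt r)) = 0 \<and> 0 \<le> Im (csqrt z / of_real (sqrt r))"
    using csqrt_principal[of z] assms
    by (auto simp: Re_divide_of_real Im_divide_of_real divide_pos_pos)
qed

lemma csqrt_eq_sqrt_mult_csqrt_divide:
  assumes "0 < d"
  shows "csqrt a = of_real (sqrt (real d)) * csqrt (a / of_nat d)"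
  using csqrt_divide_of_real[of "real d" a] assms by simp

lemma sqrt_eq_csqrt_mult_inverse_csqrt_divide:
  assumes "0 < d" and "a \<noteq> 0"
  shows "of_real (sqrt (real d)) = csqrt a * inverse (csqrt (a / of_nat d))"
  using csqrt_divide_of_real[of "real d" a] assms by (simp add: field_simps)

lemma qnum_minus: "qnum q (- x) = - qnum q x"
  unfolding qnum_def by (simp only: minus_minus minus_diff_eq minus_divide_left)

lemma qnum_of_nat_nonzero:
  assumes "not_root_of_unity q" and "0 < k"
  shows "qnum q (int k) \<noteq> 0"
proof
  assume qnum_zero: "qnum q (int k) = 0"
  have "q \<noteq> 0" and no_root: "\<And>j. 0 < j \<Longrightarrow> q ^ j \<noteq> 1"
    using assms(1) unfolding not_root_of_unity_def by auto
  have "q - inverse q \<noteq> 0"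
  proof
    assume "q - inverse q = 0"
    then have "q ^ 2 = 1" using \<open>q \<noteq> 0\<close> by (simp add: field_simps power2_eq_square)
    then show False using no_root by simp
  qed
  then have "q ^ k = inverse (q ^ k)"
    using qnum_zero unfolding qnum_def by (simp add: power_int_minus)
  then have "q ^ (2 * k) = 1"
    using \<open>q \<noteq> 0\<close> by (simp add: field_simps power_mult power2_eq_square)
  then show False using no_root assms(2) by simp
qed

lemma qnum_nonzero:
  assumes "not_root_of_unity q" and "x \<noteq> 0"
  shows "qnum q x \<noteq> 0"
proof (cases "0 < x")
  case True
  then show ?thesis using qnum_of_nat_nonzero[OF assms(1), of "nat x"] by simp
next
  case False
  then show ?thesis
    using qnum_of_nat_nonzero[OF assms(1), of "nat (- x)"] assms(2) qnum_minus[of q "- x"]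
    by simp
qed

lemma csqrt_qnum_product_eq:
  assumes "0 < m (Suc i)"
  shows "csqrt (qnum q (int (m i) + 1) * qnum q (int (m (Suc i))))
    = complex_of_real (sqrt (real ((m i + 1) * m (Suc i)))) * csqrt (qratio q i m)"
  unfolding qratio_def using assms by (intro csqrt_eq_sqrt_mult_csqrt_divide) simp

lemma of_real_sqrt_product_eq:
  assumes "not_root_of_unity q" and "0 < m (Suc i)"
  shows "complex_of_real (sqrt (real ((m i + 1) * m (Suc i))))
    = csqrt (qnum q (int (m i) + 1) * qnum q (int (m (Suc i)))) * inverse (csqrt (qratio q i m))"
  unfolding qratio_def using assms
  by (intro sqrt_eq_csqrt_mult_inverse_csqrt_divide) (simp_all add: qnum_nonzero)

lemma eplus_eq_Eplus_comp: "eplus q i = Eplus i \<circ> diag (\<lambda>m. csqrt (qratio q i m))"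
  unfolding eplus_def Eplus_def comp_assoc diag_comp_diag
  by (rule ehat_plus_comp_diag_cong) (rule csqrt_qnum_product_eq)

lemma eminus_eq_comp_Eminus: "eminus q i = diag (\<lambda>m. csqrt (qratio q i m)) \<circ> Eminus i"
  unfolding eminus_def Eminus_def comp_assoc [symmetric] diag_comp_diag
  by (rule diag_comp_ehat_minus_cong) (subst csqrt_qnum_product_eq, assumption, rule mult.commute)

lemma Eplus_eq_eplus_comp:
  assumes "not_root_of_unity q"
  shows "Eplus i = eplus q i \<circ> diag (\<lambda>m. inverse (csqrt (qratio q i m)))"
  unfolding eplus_def Eplus_def comp_assoc diag_comp_diag
  by (rule ehat_plus_comp_diag_cong) (rule of_real_sqrt_product_eq [OF assms])

lemma Eminus_eq_comp_eminus:
  assumes "not_root_of_unity q"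
  shows "Eminus i = diag (\<lambda>m. inverse (csqrt (qratio q i m))) \<circ> eminus q i"
  unfolding eminus_def Eminus_def comp_assoc [symmetric] diag_comp_diag
  by (rule diag_comp_ehat_minus_cong) (subst of_real_sqrt_product_eq [OF assms], assumption, rule mult.commute)

lemma CZ_Q_eq:
  "CZ_Q q m = csqrt (qnum q (int (m 1)) * qnum q (int (m 2) + 1) / of_nat (m 1 * (m 2 + 1)))"
proof -
  have product: "((a - b) / 2 + (a + b) / 2) * ((a - b) / 2 - (a + b) / 2 - 1) = - (a * (b + 1))"
    for a b :: real by (simp add: field_simps)
  have denominator: "complex_of_real
      (((real (m 1) - real (m 2)) / 2 + (real (m 1) + real (m 2)) / 2) *
       ((real (m 1) - real (m 2)) / 2 - (real (m 1) + real (m 2)) / 2 - 1))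
    = - of_nat (m 1 * (m 2 + 1))"
    unfolding product by (simp add: algebra_simps)
  have numerator: "qnum q (- int (m 2) - 1) = - qnum q (int (m 2) + 1)"
    using qnum_minus[of q "int (m 2) + 1"] by simp
  show ?thesis
    unfolding CZ_Q_def Let_def denominator numerator
    by (simp only: mult_minus_right minus_divide_divide)
qed

lemma CZ_Q_shift_up:
  assumes "0 < m 2"
  shows "CZ_Q q (shift_up 1 m) = csqrt (qratio q 1 m)"
  using assms by (simp add: CZ_Q_eq shift_up_def qratio_def numeral_2_eq_2 add.commute)

lemma CZ_Q_comp_Eplus: "diag (CZ_Q q) \<circ> Eplus 1 = Eplus 1 \<circ> diag (\<lambda>m. csqrt (qratio q 1 m))"
  unfolding Eplus_def comp_assoc [symmetric] diag_comp_ehat_plus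
  unfolding comp_assoc diag_comp_diag
  by (rule ehat_plus_comp_diag_cong) (metis CZ_Q_shift_up Suc_1 comp_apply mult.commute)

lemma Eminus_comp_CZ_Q: "Eminus 1 \<circ> diag (CZ_Q q) = diag (\<lambda>m. csqrt (qratio q 1 m)) \<circ> Eminus 1"
  unfolding Eminus_def comp_assoc ehat_minus_comp_diag
  unfolding comp_assoc [symmetric] diag_comp_diag
  by (rule diag_comp_ehat_minus_cong) (metis CZ_Q_shift_up Suc_1 comp_apply mult.commute)

theorem mainTheorem2:
  fixes n Lam :: nat and q :: complex
  assumes "2 \<le> n" and "0 < Lam" and "not_root_of_unity q"
  shows "(\<forall>i\<in>{1..n-1}. \<forall>v. in_V n Lam v \<longrightarrow>
            eplus q i v = (Eplus i \<circ> diag (\<lambda>m. csqrt (qratio q i m))) v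
          \<and> eminus q i v = (diag (\<lambda>m. csqrt (qratio q i m)) \<circ> Eminus i) v
          \<and> hop i v = Hop i v
          \<and> Eplus i v = (eplus q i \<circ> diag (\<lambda>m. inverse (csqrt (qratio q i m)))) v
          \<and> Eminus i v = (diag (\<lambda>m. inverse (csqrt (qratio q i m))) \<circ> eminus q i) v)
       \<and> (n = 2 \<longrightarrow> (\<forall>v. in_V n Lam v \<longrightarrow>
            eplus q 1 v = (diag (CZ_Q q) \<circ> Eplus 1) v
          \<and> eminus q 1 v = (Eminus 1 \<circ> diag (CZ_Q q)) v))"
proof -
  have Curtright_Zachos:
    "eplus q 1 = diag (CZ_Q q) \<circ> Eplus 1" "eminus q 1 = Eminus 1 \<circ> diag (CZ_Q q)"
    by (simp_all only: eplus_eq_Eplus_comp eminus_eq_comp_Eminus CZ_Q_comp_Eplus Eminus_comp_CZ_Q)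
  \<comment> \<open>All identities hold as operator identities on arbitrary coefficient functions,
    so membership in V_Lambda and the bounds on n and Lambda are not needed.\<close>
  show ?thesis
    unfolding hop_def Curtright_Zachos
      eplus_eq_Eplus_comp [symmetric] eminus_eq_comp_Eminus [symmetric]
      Eplus_eq_eplus_comp [OF assms(3), symmetric] Eminus_eq_comp_eminus [OF assms(3), symmetric]
    by simp
qed

end
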